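(* Let $X_1,\dots,X_n$ be operators in a complex Hilbert space $\mathcal{H}$, each Hermitian or skew-Hermitian, and let $\mathbf{m}=(m^{(1)},\dots,m^{(n)})$ be sequences of positive numbers each satisfying (A2). Put $\mathbf{X}=(X_1,\dots,X_n)$. Then $u\in\mathcal{S}_{\mathbf{m}}(\mathbf{X})$ if and only if $u\in C^\infty(\mathbf{X})$ and there exist constants $A,C>0$ such that $|(\mathbf{X}_\alpha u,u)|\le CA^{|\alpha|}\mathbf{m}_\alpha$ for all $\alpha\in M(n)$.
   Context: Notation: $M(n)=\bigcup_{k\ge1}\{1,\dots,n\}^k$; for $\alpha=(i_1,\dots,i_k)\in M(n)$, $|\alpha|=k$ and $|\alpha|_j=\mathrm{card}\{l: i_l=j\}$. $\mathbf{X}_\alpha=X_{i_1}\cdots X_{i_k}$; $C^\infty(\mathbf{X})=\{u\in\mathcal{H}: u\in\mathrm{Dom}(\mathbf{X}_\alpha)\ \forall\alpha\in M(n)\}$. $\mathbf{m}_\alpha=m^{(1)}_{|\alpha|_1}\cdots m^{(n)}_{|\alpha|_n}$. $\mathcal{S}_{\mathbf{m}}(\mathbf{X})=\{u\in C^\infty(\mathbf{X}): \exists A,C>0,\ \|\mathbf{X}_\alpha u\|\le CA^{|\alpha|}\mathbf{m}_\alpha\ \forall\alpha\in M(n)\}$. Condition (A2): there is $H>0$ with $m^{(j)}_{p+q}\le H^{p+q}m^{(j)}_pm^{(j)}_q$ for all $j$ and all $p,q\in\mathbb{N}$. *)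

theory Defs
  imports "HOL-Analysis.Analysis"
begin

text \<open>HOL has no complex vector spaces; we introduce complex inner product
spaces as a type class. Scalar multiplication by complex numbers is scaleC,
the inner product cinner is linear in the first argument and conjugate-linear
in the second; the norm is the one induced by the inner product. A complex
Hilbert space is a type of sort complex_inner and complete_space.\<close>

class complex_inner = real_normed_vector +
  fixes scaleC :: "complex \<Rightarrow> 'a \<Rightarrow> 'a"
    and cinner :: "'a \<Rightarrow> 'a \<Rightarrow> complex"
  assumes scaleC_add_right: "scaleC a (x + y) = scaleC a x + scaleC a y"
    and scaleC_add_left: "scaleC (a + b) x = scaleC a x + scaleC b x"
    and scaleC_scaleC: "scaleC a (scaleC b x) = scaleC (a * b) x"
    and scaleC_one: "scaleC 1 x = x"
    and scaleC_of_real: "scaleC (complex_of_real r) x = scaleR r x"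
    and cinner_conj: "cinner x y = cnj (cinner y x)"
    and cinner_add_left: "cinner (x + y) z = cinner x z + cinner y z"
    and cinner_scaleC_left: "cinner (scaleC c x) y = c * cinner x y"
    and cinner_ge_zero: "Im (cinner x x) = 0 \<and> Re (cinner x x) \<ge> 0"
    and cinner_eq_zero_iff: "cinner x x = 0 \<longleftrightarrow> x = 0"
    and norm_eq_sqrt_cinner: "norm x = sqrt (Re (cinner x x))"

definition is_operator :: "'h::complex_inner set \<Rightarrow> ('h \<Rightarrow> 'h) \<Rightarrow> bool" where
  "is_operator D T \<longleftrightarrow>
     0 \<in> D \<and> (\<forall>x\<in>D. \<forall>y\<in>D. x + y \<in> D) \<and> (\<forall>c. \<forall>x\<in>D. scaleC c x \<in> D) \<and>
     (\<forall>x\<in>D. \<forall>y\<in>D. T (x + y) = T x + T y) \<and> (\<forall>c. \<forall>x\<in>D. T (scaleC c x) = scaleC c (T x)) \<and>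
     closure D = UNIV"

definition hermitian_op :: "'h::complex_inner set \<Rightarrow> ('h \<Rightarrow> 'h) \<Rightarrow> bool" where
  "hermitian_op D T \<longleftrightarrow> is_operator D T \<and>
     (\<forall>u\<in>D. \<forall>v\<in>D. cinner (T u) v = cinner u (T v))"

definition skew_hermitian_op :: "'h::complex_inner set \<Rightarrow> ('h \<Rightarrow> 'h) \<Rightarrow> bool" where
  "skew_hermitian_op D T \<longleftrightarrow> is_operator D T \<and>
     (\<forall>u\<in>D. \<forall>v\<in>D. cinner (T u) v = - cinner u (T v))"

text \<open>A multi-index alpha = (i_1,...,i_k) is a list; X_alpha = X_{i_1} ... X_{i_k}
so X_{i # beta} = X_i X_beta. The operators are X_j = (D j, T j).\<close>

fun Xapp :: "(nat \<Rightarrow> 'h \<Rightarrow> 'h) \<Rightarrow> nat list \<Rightarrow> 'h \<Rightarrow> 'h" where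
  "Xapp T [] u = u"
| "Xapp T (i # \<alpha>) u = T i (Xapp T \<alpha> u)"

fun in_Dom :: "(nat \<Rightarrow> 'h set) \<Rightarrow> (nat \<Rightarrow> 'h \<Rightarrow> 'h) \<Rightarrow> nat list \<Rightarrow> 'h \<Rightarrow> bool" where
  "in_Dom D T [] u = True"
| "in_Dom D T (i # \<alpha>) u = (in_Dom D T \<alpha> u \<and> Xapp T \<alpha> u \<in> D i)"

definition Mn :: "nat \<Rightarrow> nat list set" where
  "Mn n = {\<alpha>. \<alpha> \<noteq> [] \<and> set \<alpha> \<subseteq> {1..n}}"

definition C_infty :: "nat \<Rightarrow> (nat \<Rightarrow> 'h set) \<Rightarrow> (nat \<Rightarrow> 'h \<Rightarrow> 'h) \<Rightarrow> 'h set" where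
  "C_infty n D T = {u. \<forall>\<alpha>\<in>Mn n. in_Dom D T \<alpha> u}"

text \<open>m_alpha = m^(1)_{|alpha|_1} ... m^(n)_{|alpha|_n}, with m j p = m^(j)_p.\<close>
definition m_alpha :: "nat \<Rightarrow> (nat \<Rightarrow> nat \<Rightarrow> real) \<Rightarrow> nat list \<Rightarrow> real" where
  "m_alpha n m \<alpha> = (\<Prod>j\<in>{1..n}. m j (count_list \<alpha> j))"

definition S_m :: "nat \<Rightarrow> (nat \<Rightarrow> nat \<Rightarrow> real) \<Rightarrow> (nat \<Rightarrow> 'h::complex_inner set) \<Rightarrow> (nat \<Rightarrow> 'h \<Rightarrow> 'h) \<Rightarrow> 'h set" where
  "S_m n m D T = {u \<in> C_infty n D T. \<exists>A C. A > 0 \<and> C > 0 \<and>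
      (\<forall>\<alpha>\<in>Mn n. norm (Xapp T \<alpha> u) \<le> C * A ^ length \<alpha> * m_alpha n m \<alpha>)}"

definition cond_A2 :: "(nat \<Rightarrow> real) \<Rightarrow> bool" where
  "cond_A2 s \<longleftrightarrow> (\<exists>H>0. \<forall>p q. s (p + q) \<le> H ^ (p + q) * s p * s q)"

end

theory Submission imports Defs begin

text \<open>One direction is Cauchy--Schwarz. For the other, since every \<open>X\<^sub>j\<close> is
symmetric up to sign, the operators of a word can be moved across the inner product one
by one, giving \<open>\<parallel>X\<^sub>\<alpha> u\<parallel>\<^sup>2 = |(X\<^sub>\<beta> u, u)|\<close> for the word \<open>\<beta> = rev \<alpha> @ \<alpha>\<close> of length
\<open>2|\<alpha>|\<close>. Condition (A2), with a constant \<open>H\<close> common to all \<open>j\<close>, bounds \<open>m\<^sub>\<beta>\<close> by \<open>H\<^sup>2\<^sup>|\<^sup>\<alpha>\<^sup>| m\<^sub>\<alpha>\<^sup>2\<close>, so taking square roots turns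
the constants \<open>A, C\<close> into \<open>A H, \<surd>C\<close>.\<close>

lemma cinner_add_right: "cinner (x::'a::complex_inner) (y + z) = cinner x y + cinner x z"
  by (metis cinner_conj cinner_add_left complex_cnj_add)

lemma cinner_scaleC_right: "cinner (x::'a::complex_inner) (scaleC c y) = cnj c * cinner x y"
  by (metis cinner_conj cinner_scaleC_left complex_cnj_mult complex_cnj_cnj)

lemma cinner_zero_right: "cinner (x::'a::complex_inner) 0 = 0"
  using cinner_add_right[of x 0 0] by simp

lemma cinner_self_eq_norm_power2: "cinner (x::'a::complex_inner) x = complex_of_real ((norm x)\<^sup>2)"
proof -
  have "Im (cinner x x) = 0" "Re (cinner x x) \<ge> 0" using cinner_ge_zero by auto
  then show ?thesis by (simp add: norm_eq_sqrt_cinner complex_eq_iff)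
qed

lemma norm_cinner_le: "cmod (cinner (a::'a::complex_inner) b) \<le> norm a * norm b"
proof (cases "b = 0")
  case True
  then show ?thesis by (simp add: cinner_zero_right)
next
  case False
  define r where "r = (norm b)\<^sup>2"
  define c where "c = cinner a b"
  define t where "t = c / complex_of_real r"
  have r: "r > 0" using False by (simp add: r_def)
  have ba: "cinner b a = cnj c" using cinner_conj c_def by metis
  \<comment> \<open>expand \<open>0 \<le> (a - t b, a - t b)\<close> with the optimal \<open>t = (a, b) / \<parallel>b\<parallel>\<^sup>2\<close>\<close>
  have "cinner (a + scaleC (-t) b) (a + scaleC (-t) b)
      = cinner a a + cnj (-t) * c + (-t) * cnj c + (-t) * cnj (-t) * complex_of_real r"
    unfolding cinner_add_left cinner_add_right cinner_scaleC_left cinner_scaleC_right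
    by (simp add: ba c_def r_def cinner_self_eq_norm_power2 algebra_simps)
  also have "\<dots> = complex_of_real ((norm a)\<^sup>2 - (cmod c)\<^sup>2 / r)"
    using r unfolding t_def cinner_self_eq_norm_power2
    by (simp add: complex_eq_iff cmod_def power2_eq_square field_simps)
  finally have "0 \<le> (norm a)\<^sup>2 - (cmod c)\<^sup>2 / r"
    using cinner_ge_zero[of "a + scaleC (-t) b"] by simp
  then have "(cmod c)\<^sup>2 \<le> (norm a * norm b)\<^sup>2"
    using r by (simp add: r_def field_simps power_mult_distrib)
  then show ?thesis
    unfolding c_def by (meson abs_le_square_iff norm_ge_zero abs_of_nonneg mult_nonneg_nonneg power2_le_imp_le)
qed

lemma Xapp_append: "Xapp T (xs @ ys) u = Xapp T xs (Xapp T ys u)"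
  by (induction xs) auto

lemma in_Dom_appendD: "in_Dom D T (xs @ ys) u \<Longrightarrow> in_Dom D T ys u"
  by (induction xs) auto

lemma sum_count_list: "set xs \<subseteq> S \<Longrightarrow> finite S \<Longrightarrow> (\<Sum>j\<in>S. count_list xs j) = length xs"
proof (induction xs)
  case Nil
  then show ?case by simp
next
  case (Cons x xs)
  have "(\<Sum>j\<in>S. count_list (x # xs) j) = (\<Sum>j\<in>S. if x = j then 1 else 0) + (\<Sum>j\<in>S. count_list xs j)"
    by (auto simp add: sum.distrib[symmetric] intro!: sum.cong)
  also have "(\<Sum>j\<in>S. if x = j then 1 else (0::nat)) = 1"
    using Cons.prems by (simp add: sum.delta)
  finally show ?case using Cons by simp
qed

lemma norm_cinner_Xapp_move:
  fixes w u :: "'h::complex_inner"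
  assumes herm: "\<forall>j\<in>{1..n}. hermitian_op (D j) (T j) \<or> skew_hermitian_op (D j) (T j)"
  shows "set \<gamma> \<subseteq> {1..n} \<Longrightarrow> in_Dom D T (rev \<gamma> @ \<delta>) w \<Longrightarrow> in_Dom D T \<gamma> u \<Longrightarrow>
    cmod (cinner (Xapp T \<delta> w) (Xapp T \<gamma> u)) = cmod (cinner (Xapp T (rev \<gamma> @ \<delta>) w) u)"
proof (induction \<gamma> arbitrary: \<delta>)
  case Nil
  then show ?case by simp
next
  case (Cons i \<gamma>)
  have rev_Cons: "rev (i # \<gamma>) @ \<delta> = rev \<gamma> @ (i # \<delta>)" by simp
  have i: "i \<in> {1..n}" using Cons.prems(1) by auto
  have dom_w: "Xapp T \<delta> w \<in> D i"
    using in_Dom_appendD[of D T "rev \<gamma>" "i # \<delta>" w] Cons.prems(2) by simp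
  have dom_u: "Xapp T \<gamma> u \<in> D i" "in_Dom D T \<gamma> u" using Cons.prems(3) by auto
  have "cmod (cinner (Xapp T \<delta> w) (T i (Xapp T \<gamma> u))) = cmod (cinner (T i (Xapp T \<delta> w)) (Xapp T \<gamma> u))"
    using herm i dom_w dom_u unfolding hermitian_op_def skew_hermitian_op_def
    by (metis norm_minus_cancel)
  also have "\<dots> = cmod (cinner (Xapp T (rev \<gamma> @ (i # \<delta>)) w) u)"
    using Cons.IH[of "i # \<delta>"] Cons.prems(1,2) dom_u rev_Cons by (simp del: rev.simps)
  finally show ?case using rev_Cons by (simp del: rev.simps)
qed

lemma norm_Xapp_power2_eq:
  assumes herm: "\<forall>j\<in>{1..n}. hermitian_op (D j) (T j) \<or> skew_hermitian_op (D j) (T j)"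
    and u: "u \<in> C_infty n D T" and \<alpha>: "\<alpha> \<in> Mn n"
  shows "(norm (Xapp T \<alpha> u))\<^sup>2 = cmod (cinner (Xapp T (rev \<alpha> @ \<alpha>) u) u)"
proof -
  have "rev \<alpha> @ \<alpha> \<in> Mn n" using \<alpha> unfolding Mn_def by auto
  then have "in_Dom D T (rev \<alpha> @ \<alpha>) u" "in_Dom D T \<alpha> u" using u \<alpha> unfolding C_infty_def by auto
  moreover have "set \<alpha> \<subseteq> {1..n}" using \<alpha> unfolding Mn_def by auto
  ultimately show ?thesis
    using norm_cinner_Xapp_move[OF herm, of \<alpha> \<alpha> u u]
    by (simp only: cinner_self_eq_norm_power2 norm_of_real abs_power2)
qed

lemma m_alpha_pos: "\<forall>j\<in>{1..n}. \<forall>p. m j p > 0 \<Longrightarrow> m_alpha n m \<alpha> > 0"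
  unfolding m_alpha_def by (intro prod_pos) auto

lemma cond_A2_uniform:
  assumes "finite J" and "\<forall>j\<in>J. cond_A2 (s j)" and "\<forall>j\<in>J. \<forall>p. s j p > 0"
  obtains H :: real where "H \<ge> 1" and "\<forall>j\<in>J. \<forall>p q. s j (p + q) \<le> H ^ (p + q) * s j p * s j q"
proof -
  obtain Hf where Hf: "\<forall>j\<in>J. Hf j > 0 \<and> (\<forall>p q. s j (p + q) \<le> Hf j ^ (p + q) * s j p * s j q)"
    using assms(2) unfolding cond_A2_def by metis
  define H where "H = 1 + (\<Sum>j\<in>J. Hf j)"
  have Hf_le: "Hf j \<le> H" if "j \<in> J" for j
  proof -
    have "Hf j \<le> (\<Sum>j\<in>J. Hf j)"
      using Hf that assms(1) by (intro member_le_sum) (auto simp: less_imp_le)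
    then show ?thesis unfolding H_def by simp
  qed
  have "H \<ge> 1" unfolding H_def using Hf by (simp, intro sum_nonneg) (auto simp: less_imp_le)
  moreover have "s j (p + q) \<le> H ^ (p + q) * s j p * s j q" if "j \<in> J" for j p q
  proof -
    have "s j (p + q) \<le> Hf j ^ (p + q) * s j p * s j q" using Hf that by blast
    also have "\<dots> \<le> H ^ (p + q) * s j p * s j q"
      using Hf Hf_le assms(3) that by (intro mult_right_mono power_mono) (auto simp: less_imp_le)
    finally show ?thesis .
  qed
  ultimately show ?thesis using that by blast
qed

lemma m_alpha_rev_append_le:
  assumes m_pos: "\<forall>j\<in>{1..n}. \<forall>p. m j p > 0"
    and H: "\<forall>j\<in>{1..n}. \<forall>p q. m j (p + q) \<le> H ^ (p + q) * m j p * m j q"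
    and \<alpha>: "set \<alpha> \<subseteq> {1..n}"
  shows "m_alpha n m (rev \<alpha> @ \<alpha>) \<le> H ^ (2 * length \<alpha>) * (m_alpha n m \<alpha>)\<^sup>2"
proof -
  define c where "c = count_list \<alpha>"
  have "m_alpha n m (rev \<alpha> @ \<alpha>) = (\<Prod>j\<in>{1..n}. m j (c j + c j))"
    unfolding m_alpha_def c_def by (simp add: count_list_append)
  also have "\<dots> \<le> (\<Prod>j\<in>{1..n}. H ^ (c j + c j) * (m j (c j))\<^sup>2)"
    using H m_pos by (intro prod_mono) (auto simp: power2_eq_square less_imp_le mult.assoc)
  also have "\<dots> = H ^ (\<Sum>j\<in>{1..n}. c j + c j) * (m_alpha n m \<alpha>)\<^sup>2"
    unfolding m_alpha_def c_def by (simp add: prod.distrib power_sum prod_power_distrib)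
  also have "(\<Sum>j\<in>{1..n}. c j + c j) = 2 * length \<alpha>"
    unfolding c_def sum.distrib using sum_count_list[OF \<alpha>] by simp
  finally show ?thesis .
qed

lemma S_m_imp_cinner_bound:
  assumes "u \<in> S_m n m D T"
  shows "\<exists>A C. A > 0 \<and> C > 0 \<and>
    (\<forall>\<alpha>\<in>Mn n. cmod (cinner (Xapp T \<alpha> u) u) \<le> C * A ^ length \<alpha> * m_alpha n m \<alpha>)"
proof -
  obtain A C where AC: "A > 0" "C > 0"
    and bound: "\<forall>\<alpha>\<in>Mn n. norm (Xapp T \<alpha> u) \<le> C * A ^ length \<alpha> * m_alpha n m \<alpha>"
    using assms unfolding S_m_def by blast
  have "cmod (cinner (Xapp T \<alpha> u) u) \<le> (C * (norm u + 1)) * A ^ length \<alpha> * m_alpha n m \<alpha>"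
    if \<alpha>: "\<alpha> \<in> Mn n" for \<alpha>
  proof -
    have "cmod (cinner (Xapp T \<alpha> u) u) \<le> norm (Xapp T \<alpha> u) * norm u" by (rule norm_cinner_le)
    also have "\<dots> \<le> (C * A ^ length \<alpha> * m_alpha n m \<alpha>) * (norm u + 1)"
      using bound \<alpha> by (intro mult_mono) (auto intro: order_trans[OF norm_ge_zero])
    finally show ?thesis by (simp add: algebra_simps)
  qed
  moreover have "C * (norm u + 1) > 0" using AC by (simp add: add_nonneg_pos)
  ultimately show ?thesis using AC by blast
qed

lemma cinner_bound_imp_S_m:
  assumes herm: "\<forall>j\<in>{1..n}. hermitian_op (D j) (T j) \<or> skew_hermitian_op (D j) (T j)"
    and m_pos: "\<forall>j\<in>{1..n}. \<forall>p. m j p > 0"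
    and m_A2: "\<forall>j\<in>{1..n}. cond_A2 (m j)"
    and u: "u \<in> C_infty n D T" and AC: "A > 0" "C > 0"
    and bound: "\<forall>\<alpha>\<in>Mn n. cmod (cinner (Xapp T \<alpha> u) u) \<le> C * A ^ length \<alpha> * m_alpha n m \<alpha>"
  shows "u \<in> S_m n m D T"
proof -
  obtain H where H1: "H \<ge> 1" and H: "\<forall>j\<in>{1..n}. \<forall>p q. m j (p + q) \<le> H ^ (p + q) * m j p * m j q"
    using cond_A2_uniform[of "{1..n}" m] m_A2 m_pos by auto
  have "norm (Xapp T \<alpha> u) \<le> sqrt C * (A * H) ^ length \<alpha> * m_alpha n m \<alpha>" if \<alpha>: "\<alpha> \<in> Mn n" for \<alpha>
  proof -
    have \<alpha>\<alpha>: "rev \<alpha> @ \<alpha> \<in> Mn n" and set_\<alpha>: "set \<alpha> \<subseteq> {1..n}"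
      using \<alpha> unfolding Mn_def by auto
    have "(norm (Xapp T \<alpha> u))\<^sup>2 \<le> C * A ^ length (rev \<alpha> @ \<alpha>) * m_alpha n m (rev \<alpha> @ \<alpha>)"
      unfolding norm_Xapp_power2_eq[OF herm u \<alpha>] using bound \<alpha>\<alpha> by blast
    also have "\<dots> = C * A ^ (2 * length \<alpha>) * m_alpha n m (rev \<alpha> @ \<alpha>)"
      by (simp add: mult_2)
    also have "\<dots> \<le> C * A ^ (2 * length \<alpha>) * (H ^ (2 * length \<alpha>) * (m_alpha n m \<alpha>)\<^sup>2)"
      using m_alpha_rev_append_le[OF m_pos H set_\<alpha>] AC by (intro mult_left_mono) simp_all
    also have "\<dots> = (sqrt C * (A * H) ^ length \<alpha> * m_alpha n m \<alpha>)\<^sup>2"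
      unfolding power_mult_distrib power_even_eq real_sqrt_pow2[OF less_imp_le[OF AC(2)]]
      by (simp only: mult_ac)
    finally have "(norm (Xapp T \<alpha> u))\<^sup>2 \<le> (sqrt C * (A * H) ^ length \<alpha> * m_alpha n m \<alpha>)\<^sup>2" .
    moreover have "0 \<le> sqrt C * (A * H) ^ length \<alpha> * m_alpha n m \<alpha>"
      using AC H1 m_alpha_pos[OF m_pos, of \<alpha>] by simp
    ultimately show ?thesis by (rule power2_le_imp_le)
  qed
  moreover have "A * H > 0" "sqrt C > 0" using AC H1 by auto
  ultimately show ?thesis unfolding S_m_def using u by blast
qed

theorem lemma2p3:
  fixes n :: nat
    and D :: "nat \<Rightarrow> 'h::{complex_inner, complete_space} set"
    and T :: "nat \<Rightarrow> 'h \<Rightarrow> 'h"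
    and m :: "nat \<Rightarrow> nat \<Rightarrow> real"
    and u :: 'h
  assumes herm: "\<forall>j\<in>{1..n}. hermitian_op (D j) (T j) \<or> skew_hermitian_op (D j) (T j)"
    and m_pos: "\<forall>j\<in>{1..n}. \<forall>p. m j p > 0"
    and m_A2: "\<forall>j\<in>{1..n}. cond_A2 (m j)"
  shows "u \<in> S_m n m D T \<longleftrightarrow>
    (u \<in> C_infty n D T \<and>
     (\<exists>A C. A > 0 \<and> C > 0 \<and>
        (\<forall>\<alpha>\<in>Mn n. cmod (cinner (Xapp T \<alpha> u) u) \<le> C * A ^ length \<alpha> * m_alpha n m \<alpha>)))"
proof
  assume "u \<in> S_m n m D T"
  then show "u \<in> C_infty n D T \<and> (\<exists>A C. A > 0 \<and> C > 0 \<and>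
      (\<forall>\<alpha>\<in>Mn n. cmod (cinner (Xapp T \<alpha> u) u) \<le> C * A ^ length \<alpha> * m_alpha n m \<alpha>))"
    using S_m_imp_cinner_bound unfolding S_m_def by blast
next
  assume "u \<in> C_infty n D T \<and> (\<exists>A C. A > 0 \<and> C > 0 \<and>
      (\<forall>\<alpha>\<in>Mn n. cmod (cinner (Xapp T \<alpha> u) u) \<le> C * A ^ length \<alpha> * m_alpha n m \<alpha>))"
  then show "u \<in> S_m n m D T"
    using cinner_bound_imp_S_m[OF herm m_pos m_A2] by blast
qed

end
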